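(* Assume that for every $t\in\mathcal T$ and every $\underline\pi_t\in\times_{j\in\mathcal N}\mathcal P(\mathcal X^j)$ the fixed-point condition of the backward recursion (see context) has a solution, so that the equilibrium generating function $\theta$ and the value functions $V^i_t$ are well defined, and let $(\beta^*,\mu^* )$ be produced by the forward recursion. Then $(\beta^*,\mu^* )$ is a perfect Bayesian equilibrium. In particular, for every $i\in\mathcal N$, every $t\in\mathcal T$, every public history $a_{1:t-1}\in\mathcal A^{t-1}$, every private history $x^i_{1:t}\in(\mathcal X^i)^t$ and every (general behavioral) strategy $\beta^i$ of player $i$, $$\mathbb E^{\beta^{*,i}_{t:T}\beta^{*,-i}_{t:T},\,\mu^*_t[a_{1:t-1}]}\Big\{\sum_{n=t}^T R^i(X_n,A_n)\,\Big|\,a_{1:t-1},x^i_{1:t}\Big\}\;\ge\;\mathbb E^{\beta^{i}_{t:T}\beta^{*,-i}_{t:T},\,\mu^*_t[a_{1:t-1}]}\Big\{\sum_{n=t}^T R^i(X_n,A_n)\,\Big|\,a_{1:t-1},x^i_{1:t}\Big\}.$$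
   Context: Model: players $\mathcal N=\{1,\dots,N\}$, horizon $\mathcal T=\{1,\dots,T\}$. Player $i$ has a finite type set $\mathcal X^i$ and a finite action set $\mathcal A^i$; $\mathcal X=\times_i\mathcal X^i$, $\mathcal A=\times_i\mathcal A^i$. Types evolve as $P(x_1)=\prod_i Q^i_1(x^i_1)$ and $P(x_{t+1}\mid x_{1:t},a_{1:t})=\prod_i Q^i_{t+1}(x^i_{t+1}\mid x^i_t,a_t)$ for known kernels $Q^i_{t}$ (each kernel may depend on the full action profile $a_t$; $Q^i_{T+1}$ is an arbitrary kernel, irrelevant for rewards). Player $i$ privately observes its own types; all actions are publicly observed, so at time $t$ player $i$ knows $(a_{1:t-1},x^i_{1:t})$. A behavioral strategy of player $i$ gives $\beta^i_t(\cdot\mid a_{1:t-1},x^i_{1:t})\in\mathcal P(\mathcal A^i)$; players randomize independently given their information. Player $i$ receives reward $R^i(x_t,a_t)$ at each time $t$. Notation: $-i$ denotes all players except $i$; $\mathcal P(S)$ is the set of probability distributions on $S$. Belief update: for $\pi^i\in\mathcal P(\mathcal X^i)$, a prescription $\gamma^i:\mathcal X^i\to\mathcal P(\mathcal A^i)$ (written $\gamma^i(a^i|x^i)$), $a\in\mathcal A$ and $t\in\mathcal T$, let $\bar F_t(\pi^i,\gamma^i,a)(y)=\frac{\sum_{x}\pi^i(x)\gamma^i(a^i|x)Q^i_{t+1}(y|x,a)}{\sum_x\pi^i(x)\gamma^i(a^i|x)}$ for $y\in\mathcal X^i$ if the denominator is positive, and $\bar F_t(\pi^i,\gamma^i,a)(y)=\sum_x\pi^i(x)Q^i_{t+1}(y|x,a)$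 otherwise. For $\underline\pi=(\pi^j)_{j}$ and $\gamma=(\gamma^j)_j$, $F_t(\underline\pi,\gamma,a)=(\bar F_t(\pi^j,\gamma^j,a))_{j\in\mathcal N}$. Backward recursion: $V^i_{T+1}\equiv0$. For $t=T,\dots,1$ and each $\underline\pi_t=(\pi^j_t)_j\in\times_j\mathcal P(\mathcal X^j)$, $\theta_t[\underline\pi_t]=\tilde\gamma_t=(\tilde\gamma^j_t)_j$ (each $\tilde\gamma^j_t:\mathcal X^j\to\mathcal P(\mathcal A^j)$) is a solution of the following fixed-point condition: for every $i$ and every $x^i\in\mathcal X^i$, $\tilde\gamma^i_t(\cdot|x^i)$ maximizes over $\gamma^i(\cdot|x^i)\in\mathcal P(\mathcal A^i)$ the quantity $$W^i_t(\gamma^i(\cdot|x^i))=\sum_{x^{-i},a,y}\Big[\prod_{j\ne i}\pi^j_t(x^j)\Big]\gamma^i(a^i|x^i)\Big[\prod_{j\ne i}\tilde\gamma^j_t(a^j|x^j)\Big]Q^i_{t+1}(y|x^i,a)\Big[R^i((x^i,x^{-i}),a)+V^i_{t+1}\big(F_t(\underline\pi_t,\tilde\gamma_t,a),y\big)\Big]$$ (the belief update inside uses $\tilde\gamma_t$, not the maximization variable); $\theta_t$ selects one such solution for each $\underline\pi_t$. Then $V^i_t(\underline\pi_t,x^i)=W^i_t(\tilde\gamma^i_t(\cdot|x^i))$. Forward recursion: $\mu^{*,i}_1[\emptyset]=Q^i_1$. For $t=1,\dots,T$ and every public history: $\underline\mu^*_t[a_{1:t-1}]=(\mu^{*,j}_t[a_{1:t-1}])_j$,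 $\mu^*_t[a_{1:t-1}](x)=\prod_j\mu^{*,j}_t[a_{1:t-1}](x^j)$; $\beta^{*,i}_t(a^i_t\mid a_{1:t-1},x^i_{1:t})=\theta^i_t[\underline\mu^*_t[a_{1:t-1}]](a^i_t\mid x^i_t)$; $\mu^{*,i}_{t+1}[a_{1:t}]=\bar F_t\big(\mu^{*,i}_t[a_{1:t-1}],\theta^i_t[\underline\mu^*_t[a_{1:t-1}]],a_t\big)$. All players use the common belief $\mu^*_t[a_{1:t-1}]$; player $i$'s belief on $x^{-i}_t$ is $\prod_{j\ne i}\mu^{*,j}_t[a_{1:t-1}]$. Conditional expectation notation: for a strategy $\beta^i$ of player $i$, $\mathbb E^{\beta^i_{t:T}\beta^{*,-i}_{t:T},\,\mu^*_t[a_{1:t-1}]}\{\cdot\mid a_{1:t-1},x^i_{1:t}\}$ is the expectation under the process in which $X^i_t=x^i_t$, $X^{-i}_t\sim\prod_{j\ne i}\mu^{*,j}_t[a_{1:t-1}]$, and for $n=t,\dots,T$, given everything realized so far (public history $a_{1:n-1}$ extending the given one, private history $x^i_{1:n}$ extending the given $x^i_{1:t}$), $A^i_n\sim\beta^i_n(\cdot|a_{1:n-1},x^i_{1:n})$ and $A^j_n\sim\beta^{*,j}_n(\cdot|a_{1:n-1},X^j_n)$ independently for $j\ne i$, and $X^j_{n+1}\sim Q^j_{n+1}(\cdot|X^j_n,A_n)$ independently over $j$. *)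

theory Defs
  imports Complex_Main "HOL-Library.FuncSet"
begin

text \<open>Time runs over 1..hor G.
  Q1 G j y = Q^j_1(y);  Q G j t x a y = Q^j_t(y | x, a) for t = 2 .. hor G + 1.
  R G i x a = R^i(x, a).\<close>

record ('p, 'x, 'a) game =
  types :: "'p \<Rightarrow> 'x set"
  acts  :: "'p \<Rightarrow> 'a set"
  Q1    :: "'p \<Rightarrow> 'x \<Rightarrow> real"
  Q     :: "'p \<Rightarrow> nat \<Rightarrow> 'x \<Rightarrow> ('p \<Rightarrow> 'a) \<Rightarrow> 'x \<Rightarrow> real"
  R     :: "'p \<Rightarrow> ('p \<Rightarrow> 'x) \<Rightarrow> ('p \<Rightarrow> 'a) \<Rightarrow> real"
  hor   :: nat

definition is_dist :: "'b set \<Rightarrow> ('b \<Rightarrow> real) \<Rightarrow> bool" where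
  "is_dist S p \<longleftrightarrow> (\<forall>s\<in>S. 0 \<le> p s) \<and> sum p S = 1"

definition Xprof :: "('p, 'x, 'a, 'z) game_scheme \<Rightarrow> ('p \<Rightarrow> 'x) set" where
  "Xprof G = PiE UNIV (types G)"

definition Aprof :: "('p, 'x, 'a, 'z) game_scheme \<Rightarrow> ('p \<Rightarrow> 'a) set" where
  "Aprof G = PiE UNIV (acts G)"

definition valid_game :: "('p::finite, 'x, 'a, 'z) game_scheme \<Rightarrow> bool" where
  "valid_game G \<longleftrightarrow>
     (\<forall>j. finite (types G j) \<and> types G j \<noteq> {} \<and> finite (acts G j) \<and> acts G j \<noteq> {}) \<and>
     (\<forall>j. is_dist (types G j) (Q1 G j)) \<and>
     (\<forall>j t x a. 2 \<le> t \<and> t \<le> hor G + 1 \<and> x \<in> types G j \<and> a \<in> Aprof G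
                \<longrightarrow> is_dist (types G j) (Q G j t x a))"

definition is_belief :: "('p, 'x, 'a, 'z) game_scheme \<Rightarrow> ('p \<Rightarrow> 'x \<Rightarrow> real) \<Rightarrow> bool" where
  "is_belief G \<pi> \<longleftrightarrow> (\<forall>j. is_dist (types G j) (\<pi> j))"

definition is_presc :: "('p, 'x, 'a, 'z) game_scheme \<Rightarrow> ('p \<Rightarrow> 'x \<Rightarrow> 'a \<Rightarrow> real) \<Rightarrow> bool" where
  "is_presc G \<gamma> \<longleftrightarrow> (\<forall>j. \<forall>x\<in>types G j. is_dist (acts G j) (\<gamma> j x))"

definition Fbar :: "('p, 'x, 'a, 'z) game_scheme \<Rightarrow> 'p \<Rightarrow> nat \<Rightarrow> ('x \<Rightarrow> real)
                    \<Rightarrow> ('x \<Rightarrow> 'a \<Rightarrow> real) \<Rightarrow> ('p \<Rightarrow> 'a) \<Rightarrow> 'x \<Rightarrow> real" where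
  "Fbar G j t p g a = (\<lambda>y.
     (let den = (\<Sum>x\<in>types G j. p x * g x (a j)) in
      if den > 0 then (\<Sum>x\<in>types G j. p x * g x (a j) * Q G j (t+1) x a y) / den
      else (\<Sum>x\<in>types G j. p x * Q G j (t+1) x a y)))"

definition F :: "('p, 'x, 'a, 'z) game_scheme \<Rightarrow> nat \<Rightarrow> ('p \<Rightarrow> 'x \<Rightarrow> real)
                 \<Rightarrow> ('p \<Rightarrow> 'x \<Rightarrow> 'a \<Rightarrow> real) \<Rightarrow> ('p \<Rightarrow> 'a) \<Rightarrow> 'p \<Rightarrow> 'x \<Rightarrow> real" where
  "F G t \<pi> \<gamma> a = (\<lambda>j. Fbar G j t (\<pi> j) (\<gamma> j) a)"

text \<open>W^i_t(d) for the belief profile pi, the candidate solution gamma~ (tgam),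
  the next value function Vn = V_{t+1}, player i with type xi, and d in P(A^i).\<close>
definition Wt :: "('p::finite, 'x, 'a, 'z) game_scheme \<Rightarrow> nat
                   \<Rightarrow> ('p \<Rightarrow> ('p \<Rightarrow> 'x \<Rightarrow> real) \<Rightarrow> 'x \<Rightarrow> real)
                   \<Rightarrow> ('p \<Rightarrow> 'x \<Rightarrow> real) \<Rightarrow> ('p \<Rightarrow> 'x \<Rightarrow> 'a \<Rightarrow> real)
                   \<Rightarrow> 'p \<Rightarrow> 'x \<Rightarrow> ('a \<Rightarrow> real) \<Rightarrow> real" where
  "Wt G t Vn \<pi> tgam i xi d =
     (\<Sum>x\<in>{x\<in>Xprof G. x i = xi}. \<Sum>a\<in>Aprof G. \<Sum>y\<in>types G i.
        (\<Prod>j\<in>UNIV-{i}. \<pi> j (x j)) * d (a i) * (\<Prod>j\<in>UNIV-{i}. tgam j (x j) (a j))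
        * Q G i (t+1) xi a y * (R G i x a + Vn i (F G t \<pi> tgam a) y))"

definition is_fp :: "('p::finite, 'x, 'a, 'z) game_scheme \<Rightarrow> nat
                   \<Rightarrow> ('p \<Rightarrow> ('p \<Rightarrow> 'x \<Rightarrow> real) \<Rightarrow> 'x \<Rightarrow> real)
                   \<Rightarrow> ('p \<Rightarrow> 'x \<Rightarrow> real) \<Rightarrow> ('p \<Rightarrow> 'x \<Rightarrow> 'a \<Rightarrow> real) \<Rightarrow> bool" where
  "is_fp G t Vn \<pi> tgam \<longleftrightarrow> is_presc G tgam \<and>
     (\<forall>i. \<forall>xi\<in>types G i. \<forall>d. is_dist (acts G i) d \<longrightarrow>
        Wt G t Vn \<pi> tgam i xi d \<le> Wt G t Vn \<pi> tgam i xi (tgam i xi))"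

text \<open>Value functions from the equilibrium generating function theta:
  Vrem G theta m = V_{T+1-m}.\<close>
primrec Vrem :: "('p::finite, 'x, 'a, 'z) game_scheme
                 \<Rightarrow> (nat \<Rightarrow> ('p \<Rightarrow> 'x \<Rightarrow> real) \<Rightarrow> ('p \<Rightarrow> 'x \<Rightarrow> 'a \<Rightarrow> real))
                 \<Rightarrow> nat \<Rightarrow> 'p \<Rightarrow> ('p \<Rightarrow> 'x \<Rightarrow> real) \<Rightarrow> 'x \<Rightarrow> real" where
  "Vrem G \<theta> 0 = (\<lambda>i \<pi> x. 0)"
| "Vrem G \<theta> (Suc m) = (\<lambda>i \<pi> x.
      Wt G (hor G - m) (Vrem G \<theta> m) \<pi> (\<theta> (hor G - m) \<pi>) i x (\<theta> (hor G - m) \<pi> i x))"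

definition Vt :: "('p::finite, 'x, 'a, 'z) game_scheme
                 \<Rightarrow> (nat \<Rightarrow> ('p \<Rightarrow> 'x \<Rightarrow> real) \<Rightarrow> ('p \<Rightarrow> 'x \<Rightarrow> 'a \<Rightarrow> real))
                 \<Rightarrow> nat \<Rightarrow> 'p \<Rightarrow> ('p \<Rightarrow> 'x \<Rightarrow> real) \<Rightarrow> 'x \<Rightarrow> real" where
  "Vt G \<theta> t = Vrem G \<theta> (hor G + 1 - t)"

definition is_egf :: "('p::finite, 'x, 'a, 'z) game_scheme
                 \<Rightarrow> (nat \<Rightarrow> ('p \<Rightarrow> 'x \<Rightarrow> real) \<Rightarrow> ('p \<Rightarrow> 'x \<Rightarrow> 'a \<Rightarrow> real)) \<Rightarrow> bool" where
  "is_egf G \<theta> \<longleftrightarrow> (\<forall>t\<in>{1..hor G}. \<forall>\<pi>. is_belief G \<pi> \<longrightarrow>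
       is_fp G t (Vt G \<theta> (t+1)) \<pi> (\<theta> t \<pi>))"

text \<open>Forward recursion for the common belief mu*_t[a_{1:t-1}]
  (computed on the reversed public history).\<close>
primrec murev :: "('p, 'x, 'a, 'z) game_scheme
                 \<Rightarrow> (nat \<Rightarrow> ('p \<Rightarrow> 'x \<Rightarrow> real) \<Rightarrow> ('p \<Rightarrow> 'x \<Rightarrow> 'a \<Rightarrow> real))
                 \<Rightarrow> ('p \<Rightarrow> 'a) list \<Rightarrow> 'p \<Rightarrow> 'x \<Rightarrow> real" where
  "murev G \<theta> [] = Q1 G"
| "murev G \<theta> (a # rh) =
     F G (length rh + 1) (murev G \<theta> rh) (\<theta> (length rh + 1) (murev G \<theta> rh)) a"

definition mu_star :: "('p, 'x, 'a, 'z) game_scheme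
                 \<Rightarrow> (nat \<Rightarrow> ('p \<Rightarrow> 'x \<Rightarrow> real) \<Rightarrow> ('p \<Rightarrow> 'x \<Rightarrow> 'a \<Rightarrow> real))
                 \<Rightarrow> ('p \<Rightarrow> 'a) list \<Rightarrow> 'p \<Rightarrow> 'x \<Rightarrow> real" where
  "mu_star G \<theta> h = murev G \<theta> (rev h)"

definition beta_star :: "('p, 'x, 'a, 'z) game_scheme
                 \<Rightarrow> (nat \<Rightarrow> ('p \<Rightarrow> 'x \<Rightarrow> real) \<Rightarrow> ('p \<Rightarrow> 'x \<Rightarrow> 'a \<Rightarrow> real))
                 \<Rightarrow> 'p \<Rightarrow> nat \<Rightarrow> ('p \<Rightarrow> 'a) list \<Rightarrow> 'x list \<Rightarrow> 'a \<Rightarrow> real" where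
  "beta_star G \<theta> j t h xh = \<theta> t (mu_star G \<theta> h) j (last xh)"

definition is_strategy :: "('p::finite, 'x, 'a, 'z) game_scheme \<Rightarrow> 'p
                 \<Rightarrow> (nat \<Rightarrow> ('p \<Rightarrow> 'a) list \<Rightarrow> 'x list \<Rightarrow> 'a \<Rightarrow> real) \<Rightarrow> bool" where
  "is_strategy G i bi \<longleftrightarrow> (\<forall>n h xh. 1 \<le> n \<and> n \<le> hor G \<and> length h = n - 1 \<and> set h \<subseteq> Aprof G
       \<and> length xh = n \<and> set xh \<subseteq> types G i \<longrightarrow> is_dist (acts G i) (bi n h xh))"

text \<open>State at time n: public history h = a_{1:n-1},
  player i's private history xh = x^i_{1:n}, current type profile x (with x i = last xh).
  Jrem ... m n ... with m = T + 1 - n remaining stages.\<close>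
primrec Jrem :: "('p::finite, 'x, 'a, 'z) game_scheme \<Rightarrow> 'p
                 \<Rightarrow> (nat \<Rightarrow> ('p \<Rightarrow> 'a) list \<Rightarrow> 'x list \<Rightarrow> 'a \<Rightarrow> real)
                 \<Rightarrow> (nat \<Rightarrow> ('p \<Rightarrow> 'a) list \<Rightarrow> 'p \<Rightarrow> 'x \<Rightarrow> 'a \<Rightarrow> real)
                 \<Rightarrow> nat \<Rightarrow> nat \<Rightarrow> ('p \<Rightarrow> 'a) list \<Rightarrow> 'x list \<Rightarrow> ('p \<Rightarrow> 'x) \<Rightarrow> real" where
  "Jrem G i bi bo 0 n h xh x = 0"
| "Jrem G i bi bo (Suc m) n h xh x =
     (\<Sum>a\<in>Aprof G. (bi n h xh (a i) * (\<Prod>j\<in>UNIV-{i}. bo n h j (x j) (a j))) *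
        (R G i x a + (\<Sum>y\<in>Xprof G. (\<Prod>j\<in>UNIV. Q G j (n+1) (x j) a (y j))
                                    * Jrem G i bi bo m (n+1) (h @ [a]) (xh @ [y i]) y)))"

text \<open>E^{bi, bo, mu}{ sum_{n=t}^T R^i(X_n,A_n) | a_{1:t-1}, x^i_{1:t} } where
  X^{-i}_t ~ prod_{j<>i} mu j.\<close>
definition cond_exp :: "('p::finite, 'x, 'a, 'z) game_scheme \<Rightarrow> 'p
                 \<Rightarrow> (nat \<Rightarrow> ('p \<Rightarrow> 'a) list \<Rightarrow> 'x list \<Rightarrow> 'a \<Rightarrow> real)
                 \<Rightarrow> (nat \<Rightarrow> ('p \<Rightarrow> 'a) list \<Rightarrow> 'p \<Rightarrow> 'x \<Rightarrow> 'a \<Rightarrow> real)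
                 \<Rightarrow> ('p \<Rightarrow> 'x \<Rightarrow> real)
                 \<Rightarrow> nat \<Rightarrow> ('p \<Rightarrow> 'a) list \<Rightarrow> 'x list \<Rightarrow> real" where
  "cond_exp G i bi bo mu t h xh =
     (\<Sum>x\<in>{x\<in>Xprof G. x i = last xh}. (\<Prod>j\<in>UNIV-{i}. mu j (x j))
        * Jrem G i bi bo (hor G + 1 - t) t h xh x)"

end

theory Submission
  imports Defs
begin

text \<open>Backward induction on the number of remaining stages. Given the public
  history, the types of the players are independent and the posterior of player
  j after the action profile a is the Bayesian update Fbar, so the other players'
  types at the next stage are distributed according to the next common belief
  mu* = F(mu*, gamma, a). Hence the reward-to-go of player i under any strategy
  is a one-stage expression of the same shape as W_t, with the continuation
  reward-to-go in place of V_{t+1}. By induction the continuation under beta*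
  equals V_{t+1} and under any other strategy it is at most V_{t+1}; the
  fixed-point condition then says that player i's current randomization cannot
  beat the prescription theta_t.\<close>

lemma sum_PiE_fixed_coord_prod:
  fixes T :: "'p::finite \<Rightarrow> 'x set" and g :: "'p \<Rightarrow> 'x \<Rightarrow> 'b::comm_semiring_1"
  assumes fin: "\<And>j. finite (T j)" and xi: "xi \<in> T i"
  shows "(\<Sum>x\<in>{x\<in>PiE UNIV T. x i = xi}. \<Prod>j\<in>UNIV-{i}. g j (x j))
       = (\<Prod>j\<in>UNIV-{i}. \<Sum>z\<in>T j. g j z)"
proof -
  define T' where "T' = T(i := {xi})"
  define g' where "g' = (\<lambda>j z. if j = i then 1 else g j z)"
  have S: "{x\<in>PiE UNIV T. x i = xi} = PiE UNIV T'"
    using xi by (auto simp: T'_def PiE_iff split: if_splits; metis)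
  have P: "(\<Prod>j\<in>UNIV. g' j (x j)) = (\<Prod>j\<in>UNIV-{i}. g j (x j))" for x
    by (subst prod.remove[of UNIV i]) (auto simp: g'_def intro!: prod.cong)
  have "(\<Prod>j\<in>UNIV. \<Sum>z\<in>T' j. g' j z) = (\<Sum>x\<in>PiE UNIV T'. \<Prod>j\<in>UNIV. g' j (x j))"
    by (rule prod_sum_PiE) (auto simp: T'_def fin)
  moreover have "(\<Prod>j\<in>UNIV. \<Sum>z\<in>T' j. g' j z) = (\<Prod>j\<in>UNIV-{i}. \<Sum>z\<in>T j. g j z)"
    by (subst prod.remove[of UNIV i]) (auto simp: g'_def T'_def intro!: prod.cong sum.cong)
  ultimately show ?thesis
    using S P by simp
qed

lemma finite_Xprof:
  fixes G :: "('p::finite, 'x, 'a, 'z) game_scheme"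
  shows "(\<And>j. finite (types G j)) \<Longrightarrow> finite (Xprof G)"
  unfolding Xprof_def by (rule finite_PiE) auto

lemma Aprof_memD: "a \<in> Aprof G \<Longrightarrow> a j \<in> acts G j"
  by (auto simp: Aprof_def PiE_iff)

subsection \<open>Bayesian update\<close>

text \<open>Bayes' rule in the form that also covers a vanishing normalizer, where
  Fbar falls back to the prior-predictive distribution.\<close>
lemma sum_mult_Q_eq_Fbar:
  assumes fin: "finite (types G j)"
    and nonneg: "\<And>z. z \<in> types G j \<Longrightarrow> 0 \<le> p z * g z (a j)"
  shows "(\<Sum>z\<in>types G j. p z * g z (a j) * Q G j (n+1) z a y)
       = (\<Sum>z\<in>types G j. p z * g z (a j)) * Fbar G j n p g a y"
proof (cases "(\<Sum>z\<in>types G j. p z * g z (a j)) > 0")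
  case True
  then show ?thesis by (simp add: Fbar_def Let_def)
next
  case False
  moreover have "0 \<le> (\<Sum>z\<in>types G j. p z * g z (a j))"
    using nonneg by (rule sum_nonneg)
  ultimately have zero: "(\<Sum>z\<in>types G j. p z * g z (a j)) = 0"
    by simp
  then have "\<forall>z\<in>types G j. p z * g z (a j) = 0"
    using nonneg by (simp add: sum_nonneg_eq_0_iff[OF fin])
  then have "(\<Sum>z\<in>types G j. p z * g z (a j) * Q G j (n+1) z a y) = 0"
    by (intro sum.neutral) auto
  with zero show ?thesis by simp
qed

lemma is_dist_Fbar:
  assumes p: "is_dist (types G j) p"
    and g: "\<And>z. z \<in> types G j \<Longrightarrow> 0 \<le> g z (a j)"
    and Qd: "\<And>z. z \<in> types G j \<Longrightarrow> is_dist (types G j) (Q G j (n+1) z a)"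
  shows "is_dist (types G j) (Fbar G j n p g a)"
proof -
  have Qn: "0 \<le> Q G j (n+1) z a y" if "z \<in> types G j" "y \<in> types G j" for z y
    using Qd that by (simp add: is_dist_def)
  have mass: "(\<Sum>y\<in>types G j. \<Sum>z\<in>types G j. c z * Q G j (n+1) z a y)
      = (\<Sum>z\<in>types G j. c z)" for c
    using Qd by (subst sum.swap) (simp add: sum_distrib_left[symmetric] is_dist_def)
  have pg: "0 \<le> p z * g z (a j)" "0 \<le> p z" if "z \<in> types G j" for z
    using p g that by (simp_all add: is_dist_def)
  show ?thesis
  proof (cases "(\<Sum>z\<in>types G j. p z * g z (a j)) > 0")
    case True
    then show ?thesis
      using mass[of "\<lambda>z. p z * g z (a j)"] pg Qn
      by (auto simp: is_dist_def Fbar_def sum_divide_distrib[symmetric]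
          intro!: divide_nonneg_nonneg sum_nonneg)
  next
    case False
    then show ?thesis
      using mass[of p] p pg Qn
      by (auto simp: is_dist_def Fbar_def intro!: sum_nonneg)
  qed
qed

lemma mu_star_snoc:
  "mu_star G \<theta> (h @ [a])
     = F G (length h + 1) (mu_star G \<theta> h) (\<theta> (length h + 1) (mu_star G \<theta> h)) a"
  by (simp add: mu_star_def)

lemma is_belief_mu_star:
  assumes vg: "valid_game G" and egf: "is_egf G \<theta>"
  shows "length h \<le> hor G \<Longrightarrow> set h \<subseteq> Aprof G \<Longrightarrow> is_belief G (mu_star G \<theta> h)"
proof (induction h rule: rev_induct)
  case Nil
  then show ?case
    using vg by (simp add: mu_star_def is_belief_def valid_game_def)
next
  case (snoc a h)
  let ?n = "length h + 1" and ?\<mu> = "mu_star G \<theta> h"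
  have bel: "is_belief G ?\<mu>" and a: "a \<in> Aprof G" and n: "?n \<in> {1..hor G}"
    using snoc by auto
  then have "is_presc G (\<theta> ?n ?\<mu>)"
    using egf by (simp add: is_egf_def is_fp_def)
  then show ?case
    unfolding mu_star_snoc is_belief_def F_def
    using bel a n vg Aprof_memD[OF a]
    by (intro allI is_dist_Fbar) (auto simp: is_belief_def is_presc_def is_dist_def valid_game_def)
qed

lemma is_fp_mu_star:
  assumes "valid_game G" and egf: "is_egf G \<theta>"
    and "1 \<le> n" "n \<le> hor G" "length h = n - 1" "set h \<subseteq> Aprof G"
  shows "is_fp G n (Vt G \<theta> (n+1)) (mu_star G \<theta> h) (\<theta> n (mu_star G \<theta> h))"
  using is_belief_mu_star[OF assms(1,2)] egf assms(3-6) by (simp add: is_egf_def)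

subsection \<open>One stage of the recursion\<close>

definition stage_reward :: "('p::finite, 'x, 'a, 'z) game_scheme \<Rightarrow> 'p \<Rightarrow> ('p \<Rightarrow> 'x \<Rightarrow> real)
    \<Rightarrow> ('p \<Rightarrow> 'x \<Rightarrow> 'a \<Rightarrow> real) \<Rightarrow> 'x \<Rightarrow> ('p \<Rightarrow> 'a) \<Rightarrow> real" where
  "stage_reward G i \<pi> \<gamma> xi a = (\<Sum>x\<in>{x\<in>Xprof G. x i = xi}.
     (\<Prod>j\<in>UNIV-{i}. \<pi> j (x j)) * (\<Prod>j\<in>UNIV-{i}. \<gamma> j (x j) (a j)) * R G i x a)"

definition others_act_prob :: "('p::finite, 'x, 'a, 'z) game_scheme \<Rightarrow> 'p \<Rightarrow> ('p \<Rightarrow> 'x \<Rightarrow> real)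
    \<Rightarrow> ('p \<Rightarrow> 'x \<Rightarrow> 'a \<Rightarrow> real) \<Rightarrow> ('p \<Rightarrow> 'a) \<Rightarrow> real" where
  "others_act_prob G i \<pi> \<gamma> a = (\<Prod>j\<in>UNIV-{i}. \<Sum>z\<in>types G j. \<pi> j z * \<gamma> j z (a j))"

text \<open>The common shape of W_t and of the reward-to-go: player i of type xi
  randomizes by d, and W a y is the continuation value after the action profile a
  when player i's next type is y.\<close>
definition stage_value :: "('p::finite, 'x, 'a, 'z) game_scheme \<Rightarrow> nat \<Rightarrow> 'p
    \<Rightarrow> ('p \<Rightarrow> 'x \<Rightarrow> real) \<Rightarrow> ('p \<Rightarrow> 'x \<Rightarrow> 'a \<Rightarrow> real) \<Rightarrow> 'x \<Rightarrow> ('a \<Rightarrow> real)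
    \<Rightarrow> (('p \<Rightarrow> 'a) \<Rightarrow> 'x \<Rightarrow> real) \<Rightarrow> real" where
  "stage_value G n i \<pi> \<gamma> xi d W = (\<Sum>a\<in>Aprof G. d (a i) *
     (stage_reward G i \<pi> \<gamma> xi a
      + others_act_prob G i \<pi> \<gamma> a * (\<Sum>y\<in>types G i. Q G i (n+1) xi a y * W a y)))"

lemma others_act_prob_nonneg:
  assumes "is_belief G \<pi>" "is_presc G \<gamma>" "a \<in> Aprof G"
  shows "0 \<le> others_act_prob G i \<pi> \<gamma> a"
  using assms Aprof_memD[OF assms(3)]
  unfolding others_act_prob_def is_belief_def is_presc_def is_dist_def
  by (intro prod_nonneg sum_nonneg mult_nonneg_nonneg) auto

lemma sum_others_weight_eq_others_act_prob:
  fixes G :: "('p::finite, 'x, 'a, 'z) game_scheme"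
  assumes fin: "\<And>j. finite (types G j)" and xi: "xi \<in> types G i"
  shows "(\<Sum>x\<in>{x\<in>Xprof G. x i = xi}. (\<Prod>j\<in>UNIV-{i}. \<pi> j (x j)) * (\<Prod>j\<in>UNIV-{i}. \<gamma> j (x j) (a j)))
       = others_act_prob G i \<pi> \<gamma> a"
  unfolding Xprof_def others_act_prob_def prod.distrib[symmetric]
  by (rule sum_PiE_fixed_coord_prod[where T = "types G" and g = "\<lambda>j z. \<pi> j z * \<gamma> j z (a j)",
        OF fin xi])

lemma stage_value_mono:
  assumes d: "\<And>b. b \<in> acts G i \<Longrightarrow> 0 \<le> d b"
    and "is_belief G \<pi>" "is_presc G \<gamma>"
    and Q_nonneg: "\<And>a y. a \<in> Aprof G \<Longrightarrow> y \<in> types G i \<Longrightarrow> 0 \<le> Q G i (n+1) xi a y"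
    and le: "\<And>a y. a \<in> Aprof G \<Longrightarrow> y \<in> types G i \<Longrightarrow> W a y \<le> W' a y"
  shows "stage_value G n i \<pi> \<gamma> xi d W \<le> stage_value G n i \<pi> \<gamma> xi d W'"
  unfolding stage_value_def
proof (intro sum_mono mult_left_mono add_left_mono)
  fix a assume a: "a \<in> Aprof G"
  show "0 \<le> d (a i)" using d Aprof_memD[OF a] .
  show "0 \<le> others_act_prob G i \<pi> \<gamma> a" using assms(2,3) a by (rule others_act_prob_nonneg)
  fix y assume y: "y \<in> types G i"
  show "0 \<le> Q G i (n+1) xi a y" using Q_nonneg[OF a y] .
  show "W a y \<le> W' a y" using le[OF a y] .
qed

lemma stage_value_cong:
  assumes "\<And>a y. a \<in> Aprof G \<Longrightarrow> y \<in> types G i \<Longrightarrow> W a y = W' a y"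
  shows "stage_value G n i \<pi> \<gamma> xi d W = stage_value G n i \<pi> \<gamma> xi d W'"
  unfolding stage_value_def using assms by (intro sum.cong refl) auto

lemma Wt_eq_stage_value:
  fixes G :: "('p::finite, 'x, 'a, 'z) game_scheme"
  assumes fin: "\<And>j. finite (types G j)" and xi: "xi \<in> types G i"
    and Q_mass: "\<And>a. a \<in> Aprof G \<Longrightarrow> (\<Sum>y\<in>types G i. Q G i (n+1) xi a y) = 1"
  shows "Wt G n Vn \<pi> \<gamma> i xi d = stage_value G n i \<pi> \<gamma> xi d (\<lambda>a y. Vn i (F G n \<pi> \<gamma> a) y)"
proof -
  let ?P = "\<lambda>x. \<Prod>j\<in>UNIV-{i}. \<pi> j (x j)"
  let ?Ga = "\<lambda>x a. \<Prod>j\<in>UNIV-{i}. \<gamma> j (x j) (a j)"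
  let ?QV = "\<lambda>a. \<Sum>y\<in>types G i. Q G i (n+1) xi a y * Vn i (F G n \<pi> \<gamma> a) y"
  have inner: "(\<Sum>y\<in>types G i. ?P x * d (a i) * ?Ga x a * Q G i (n+1) xi a y
                  * (R G i x a + Vn i (F G n \<pi> \<gamma> a) y))
      = d (a i) * (?P x * ?Ga x a * R G i x a) + d (a i) * (?P x * ?Ga x a) * ?QV a"
    if a: "a \<in> Aprof G" for x a
  proof -
    have "(\<Sum>y\<in>types G i. ?P x * d (a i) * ?Ga x a * Q G i (n+1) xi a y
                  * (R G i x a + Vn i (F G n \<pi> \<gamma> a) y))
      = d (a i) * (?P x * ?Ga x a * R G i x a) * (\<Sum>y\<in>types G i. Q G i (n+1) xi a y)
        + d (a i) * (?P x * ?Ga x a) * ?QV a"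
      unfolding sum_distrib_left sum.distrib[symmetric] by (intro sum.cong) (simp_all add: algebra_simps)
    then show ?thesis using Q_mass[OF a] by simp
  qed
  have "Wt G n Vn \<pi> \<gamma> i xi d = (\<Sum>x\<in>{x\<in>Xprof G. x i = xi}. \<Sum>a\<in>Aprof G.
          d (a i) * (?P x * ?Ga x a * R G i x a) + d (a i) * (?P x * ?Ga x a) * ?QV a)"
    unfolding Wt_def by (intro sum.cong refl inner)
  also have "\<dots> = (\<Sum>a\<in>Aprof G. \<Sum>x\<in>{x\<in>Xprof G. x i = xi}.
          d (a i) * (?P x * ?Ga x a * R G i x a) + d (a i) * (?P x * ?Ga x a) * ?QV a)"
    by (rule sum.swap)
  also have "\<dots> = stage_value G n i \<pi> \<gamma> xi d (\<lambda>a y. Vn i (F G n \<pi> \<gamma> a) y)"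
    unfolding stage_value_def stage_reward_def
      sum_others_weight_eq_others_act_prob[OF fin xi, symmetric]
    by (simp add: sum.distrib sum_distrib_left sum_distrib_right algebra_simps)
  finally show ?thesis .
qed

subsection \<open>Reward-to-go\<close>

lemma posterior_factorization:
  fixes G :: "('p::finite, 'x, 'a, 'z) game_scheme"
  assumes fin: "\<And>j. finite (types G j)" and xi: "xi \<in> types G i" and a: "a \<in> Aprof G"
    and bel: "is_belief G \<pi>" and pr: "is_presc G \<gamma>"
  shows "(\<Sum>x\<in>{x\<in>Xprof G. x i = xi}. (\<Prod>j\<in>UNIV-{i}. \<pi> j (x j))
            * (\<Prod>j\<in>UNIV-{i}. \<gamma> j (x j) (a j)) * (\<Prod>j\<in>UNIV. Q G j (n+1) (x j) a (y j)))
       = Q G i (n+1) xi a (y i) * others_act_prob G i \<pi> \<gamma> a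
            * (\<Prod>j\<in>UNIV-{i}. F G n \<pi> \<gamma> a j (y j))"
proof -
  let ?w = "\<lambda>j z. \<pi> j z * \<gamma> j z (a j) * Q G j (n+1) z a (y j)"
  have w_nonneg: "0 \<le> \<pi> j z * \<gamma> j z (a j)" if "z \<in> types G j" for j z
    using bel pr Aprof_memD[OF a] that
    by (simp add: is_belief_def is_presc_def is_dist_def)
  have "(\<Sum>x\<in>{x\<in>Xprof G. x i = xi}. (\<Prod>j\<in>UNIV-{i}. \<pi> j (x j))
            * (\<Prod>j\<in>UNIV-{i}. \<gamma> j (x j) (a j)) * (\<Prod>j\<in>UNIV. Q G j (n+1) (x j) a (y j)))
      = Q G i (n+1) xi a (y i) * (\<Sum>x\<in>{x\<in>PiE UNIV (types G). x i = xi}. \<Prod>j\<in>UNIV-{i}. ?w j (x j))"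
    by (simp add: Xprof_def sum_distrib_left prod.distrib prod.remove[of UNIV i] algebra_simps)
  also have "\<dots> = Q G i (n+1) xi a (y i) * (\<Prod>j\<in>UNIV-{i}. \<Sum>z\<in>types G j. ?w j z)"
    by (subst sum_PiE_fixed_coord_prod[where T = "types G", OF fin xi]) (rule refl)
  also have "\<dots> = Q G i (n+1) xi a (y i) * (\<Prod>j\<in>UNIV-{i}.
       (\<Sum>z\<in>types G j. \<pi> j z * \<gamma> j z (a j)) * Fbar G j n (\<pi> j) (\<gamma> j) a (y j))"
  proof (intro arg_cong[where f = "(*) _"] prod.cong refl)
    fix j
    show "(\<Sum>z\<in>types G j. ?w j z)
        = (\<Sum>z\<in>types G j. \<pi> j z * \<gamma> j z (a j)) * Fbar G j n (\<pi> j) (\<gamma> j) a (y j)"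
      using fin w_nonneg by (rule sum_mult_Q_eq_Fbar)
  qed
  finally show ?thesis
    by (simp add: prod.distrib others_act_prob_def F_def mult.assoc)
qed

text \<open>cond_exp at the common belief mu*, with the number m of remaining stages
  decoupled from the current time n (cond_exp has m = T + 1 - n).\<close>
definition cond_exp_rem :: "('p::finite, 'x, 'a, 'z) game_scheme
    \<Rightarrow> (nat \<Rightarrow> ('p \<Rightarrow> 'x \<Rightarrow> real) \<Rightarrow> ('p \<Rightarrow> 'x \<Rightarrow> 'a \<Rightarrow> real)) \<Rightarrow> 'p
    \<Rightarrow> (nat \<Rightarrow> ('p \<Rightarrow> 'a) list \<Rightarrow> 'x list \<Rightarrow> 'a \<Rightarrow> real)
    \<Rightarrow> nat \<Rightarrow> nat \<Rightarrow> ('p \<Rightarrow> 'a) list \<Rightarrow> 'x list \<Rightarrow> real" where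
  "cond_exp_rem G \<theta> i b m n h xh = (\<Sum>x\<in>{x\<in>Xprof G. x i = last xh}.
     (\<Prod>j\<in>UNIV-{i}. mu_star G \<theta> h j (x j))
     * Jrem G i b (\<lambda>n h' j x. \<theta> n (mu_star G \<theta> h') j x) m n h xh x)"

lemma cond_exp_rem_Suc:
  fixes G :: "('p::finite, 'x, 'a, 'z) game_scheme"
  assumes fin: "\<And>j. finite (types G j)" and xi: "last xh \<in> types G i"
    and len: "length h + 1 = n"
    and bel: "is_belief G (mu_star G \<theta> h)" and pr: "is_presc G (\<theta> n (mu_star G \<theta> h))"
  shows "cond_exp_rem G \<theta> i b (Suc m) n h xh
       = stage_value G n i (mu_star G \<theta> h) (\<theta> n (mu_star G \<theta> h)) (last xh) (b n h xh)
           (\<lambda>a y. cond_exp_rem G \<theta> i b m (n+1) (h @ [a]) (xh @ [y]))"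
proof -
  define \<mu> where "\<mu> = mu_star G \<theta> h"
  define \<gamma> where "\<gamma> = \<theta> n \<mu>"
  define bo where "bo = (\<lambda>n h' j x. \<theta> n (mu_star G \<theta> h') j x)"
  let ?S = "{x\<in>Xprof G. x i = last xh}"
  let ?P = "\<lambda>x. \<Prod>j\<in>UNIV-{i}. \<mu> j (x j)"
  let ?Ga = "\<lambda>x a. \<Prod>j\<in>UNIV-{i}. \<gamma> j (x j) (a j)"
  let ?K = "\<lambda>x a y. \<Prod>j\<in>UNIV. Q G j (n+1) (x j) a (y j)"
  let ?J = "\<lambda>a y. Jrem G i b bo m (n+1) (h @ [a]) (xh @ [y i]) y"
  let ?T = "\<lambda>x a. \<Sum>y\<in>Xprof G. ?K x a y * ?J a y"
  let ?E = "\<lambda>a yi. cond_exp_rem G \<theta> i b m (n+1) (h @ [a]) (xh @ [yi])"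
  have continuation: "(\<Sum>x\<in>?S. ?P x * ?Ga x a * ?T x a)
      = others_act_prob G i \<mu> \<gamma> a * (\<Sum>yi\<in>types G i. Q G i (n+1) (last xh) a yi * ?E a yi)"
    if a: "a \<in> Aprof G" for a
  proof -
    let ?F = "\<lambda>y. \<Prod>j\<in>UNIV-{i}. F G n \<mu> \<gamma> a j (y j)"
    have "(\<Sum>x\<in>?S. ?P x * ?Ga x a * ?T x a) = (\<Sum>y\<in>Xprof G. (\<Sum>x\<in>?S. ?P x * ?Ga x a * ?K x a y) * ?J a y)"
      by (simp add: sum_distrib_left sum_distrib_right mult.assoc sum.swap[of _ ?S])
    also have "\<dots> = (\<Sum>y\<in>Xprof G. Q G i (n+1) (last xh) a (y i) * others_act_prob G i \<mu> \<gamma> a * ?F y * ?J a y)"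
      using posterior_factorization[OF fin xi a bel[folded \<mu>_def] pr[folded \<mu>_def, folded \<gamma>_def]]
      by simp
    also have "\<dots> = others_act_prob G i \<mu> \<gamma> a * (\<Sum>yi\<in>types G i. Q G i (n+1) (last xh) a yi
                       * (\<Sum>y\<in>{y\<in>Xprof G. y i = yi}. ?F y * ?J a y))"
      by (subst sum.group[OF finite_Xprof[OF fin] fin[of i], of "\<lambda>y. y i", symmetric])
        (auto simp: Xprof_def PiE_iff sum_distrib_left algebra_simps intro!: sum.cong)
    also have "\<dots> = others_act_prob G i \<mu> \<gamma> a * (\<Sum>yi\<in>types G i. Q G i (n+1) (last xh) a yi * ?E a yi)"
      using len by (simp add: cond_exp_rem_def mu_star_snoc bo_def \<mu>_def \<gamma>_def)
    finally show ?thesis .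
  qed
  have "cond_exp_rem G \<theta> i b (Suc m) n h xh = (\<Sum>x\<in>?S. \<Sum>a\<in>Aprof G.
          b n h xh (a i) * (?P x * ?Ga x a * R G i x a) + b n h xh (a i) * (?P x * ?Ga x a * ?T x a))"
    unfolding cond_exp_rem_def Jrem.simps
    by (simp add: sum_distrib_left algebra_simps bo_def \<mu>_def \<gamma>_def)
  also have "\<dots> = (\<Sum>a\<in>Aprof G. \<Sum>x\<in>?S.
          b n h xh (a i) * (?P x * ?Ga x a * R G i x a) + b n h xh (a i) * (?P x * ?Ga x a * ?T x a))"
    by (rule sum.swap)
  also have "\<dots> = stage_value G n i \<mu> \<gamma> (last xh) (b n h xh) ?E"
    unfolding stage_value_def stage_reward_def
    by (intro sum.cong refl) (simp only: continuation sum.distrib distrib_left sum_distrib_left[symmetric])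
  finally show ?thesis by (simp add: \<mu>_def \<gamma>_def)
qed

subsection \<open>Backward induction\<close>

lemma Wt_Vrem_eq_stage_value:
  fixes G :: "('p::finite, 'x, 'a, 'z) game_scheme"
  assumes vg: "valid_game G" and n: "n + Suc m = hor G + 1" "1 \<le> n"
    and len: "length h = n - 1" and xi: "xi \<in> types G i"
  shows "Wt G n (Vrem G \<theta> m) (mu_star G \<theta> h) (\<theta> n (mu_star G \<theta> h)) i xi d
       = stage_value G n i (mu_star G \<theta> h) (\<theta> n (mu_star G \<theta> h)) xi d
           (\<lambda>a y. Vrem G \<theta> m i (mu_star G \<theta> (h @ [a])) y)"
proof -
  have fin: "\<And>j. finite (types G j)"
    using vg by (simp add: valid_game_def)
  have "(\<Sum>y\<in>types G i. Q G i (n+1) xi a y) = 1" if "a \<in> Aprof G" for a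
    using vg n xi that by (simp add: valid_game_def is_dist_def)
  then show ?thesis
    using len n by (simp add: Wt_eq_stage_value[OF fin xi] mu_star_snoc)
qed

lemma Vrem_Suc_eq_stage_value:
  fixes G :: "('p::finite, 'x, 'a, 'z) game_scheme"
  assumes vg: "valid_game G" and n: "n + Suc m = hor G + 1" "1 \<le> n"
    and len: "length h = n - 1" and xi: "xi \<in> types G i"
  shows "Vrem G \<theta> (Suc m) i (mu_star G \<theta> h) xi
       = stage_value G n i (mu_star G \<theta> h) (\<theta> n (mu_star G \<theta> h)) xi
           (\<theta> n (mu_star G \<theta> h) i xi) (\<lambda>a y. Vrem G \<theta> m i (mu_star G \<theta> (h @ [a])) y)"
proof -
  have "hor G - m = n" using n by simp
  then show ?thesis
    using Wt_Vrem_eq_stage_value[OF vg n len xi] by simp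
qed

lemma stage_value_le_Vrem_Suc:
  fixes G :: "('p::finite, 'x, 'a, 'z) game_scheme"
  assumes vg: "valid_game G" and egf: "is_egf G \<theta>"
    and n: "n + Suc m = hor G + 1" "1 \<le> n"
    and h: "length h = n - 1" "set h \<subseteq> Aprof G" and xi: "xi \<in> types G i"
    and d: "is_dist (acts G i) d"
  shows "stage_value G n i (mu_star G \<theta> h) (\<theta> n (mu_star G \<theta> h)) xi d
           (\<lambda>a y. Vrem G \<theta> m i (mu_star G \<theta> (h @ [a])) y)
       \<le> Vrem G \<theta> (Suc m) i (mu_star G \<theta> h) xi"
proof -
  have "hor G + 1 - (n+1) = m" using n by simp
  then have "Vt G \<theta> (n+1) = Vrem G \<theta> m" by (simp only: Vt_def)
  then have "Wt G n (Vrem G \<theta> m) (mu_star G \<theta> h) (\<theta> n (mu_star G \<theta> h)) i xi d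
      \<le> Wt G n (Vrem G \<theta> m) (mu_star G \<theta> h) (\<theta> n (mu_star G \<theta> h)) i xi (\<theta> n (mu_star G \<theta> h) i xi)"
    using is_fp_mu_star[OF vg egf _ _ h] n xi d by (simp add: is_fp_def)
  then show ?thesis
    unfolding Vrem_Suc_eq_stage_value[OF vg n h(1) xi] Wt_Vrem_eq_stage_value[OF vg n h(1) xi] .
qed

lemma cond_exp_rem_beta_star_eq_Vrem:
  fixes G :: "('p::finite, 'x, 'a, 'z) game_scheme"
  assumes vg: "valid_game G" and egf: "is_egf G \<theta>"
  shows "n + m = hor G + 1 \<Longrightarrow> 1 \<le> n \<Longrightarrow> length h = n - 1 \<Longrightarrow> set h \<subseteq> Aprof G
    \<Longrightarrow> length xh = n \<Longrightarrow> set xh \<subseteq> types G i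
    \<Longrightarrow> cond_exp_rem G \<theta> i (beta_star G \<theta> i) m n h xh = Vrem G \<theta> m i (mu_star G \<theta> h) (last xh)"
proof (induction m arbitrary: n h xh)
  case 0
  then show ?case by (simp add: cond_exp_rem_def)
next
  case (Suc m)
  define \<mu> where "\<mu> = mu_star G \<theta> h"
  have fin: "\<And>j. finite (types G j)"
    using vg by (simp add: valid_game_def)
  have xi: "last xh \<in> types G i"
    using Suc.prems by (metis last_in_set list.size(3) not_one_le_zero subsetD)
  have bel: "is_belief G \<mu>" and fp: "is_fp G n (Vt G \<theta> (n+1)) \<mu> (\<theta> n \<mu>)"
    using is_belief_mu_star[OF vg egf] is_fp_mu_star[OF vg egf] Suc.prems
    by (simp_all add: \<mu>_def)
  have "cond_exp_rem G \<theta> i (beta_star G \<theta> i) (Suc m) n h xh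
      = stage_value G n i \<mu> (\<theta> n \<mu>) (last xh) (\<theta> n \<mu> i (last xh))
          (\<lambda>a y. cond_exp_rem G \<theta> i (beta_star G \<theta> i) m (n+1) (h @ [a]) (xh @ [y]))"
    using cond_exp_rem_Suc[OF fin xi _ bel[unfolded \<mu>_def]] fp Suc.prems
    by (simp add: is_fp_def beta_star_def \<mu>_def)
  also have "\<dots> = stage_value G n i \<mu> (\<theta> n \<mu>) (last xh) (\<theta> n \<mu> i (last xh))
          (\<lambda>a y. Vrem G \<theta> m i (mu_star G \<theta> (h @ [a])) y)"
  proof (rule stage_value_cong)
    fix a y assume "a \<in> Aprof G" "y \<in> types G i"
    then show "cond_exp_rem G \<theta> i (beta_star G \<theta> i) m (n+1) (h @ [a]) (xh @ [y])
        = Vrem G \<theta> m i (mu_star G \<theta> (h @ [a])) y"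
      using Suc.IH[of "n+1" "h @ [a]" "xh @ [y]"] Suc.prems by simp
  qed
  also have "\<dots> = Vrem G \<theta> (Suc m) i \<mu> (last xh)"
    using Vrem_Suc_eq_stage_value[OF vg _ _ _ xi] Suc.prems by (simp add: \<mu>_def)
  finally show ?case by (simp add: \<mu>_def)
qed

lemma cond_exp_rem_le_Vrem:
  fixes G :: "('p::finite, 'x, 'a, 'z) game_scheme"
  assumes vg: "valid_game G" and egf: "is_egf G \<theta>" and bi: "is_strategy G i bi"
  shows "n + m = hor G + 1 \<Longrightarrow> 1 \<le> n \<Longrightarrow> length h = n - 1 \<Longrightarrow> set h \<subseteq> Aprof G
    \<Longrightarrow> length xh = n \<Longrightarrow> set xh \<subseteq> types G i
    \<Longrightarrow> cond_exp_rem G \<theta> i bi m n h xh \<le> Vrem G \<theta> m i (mu_star G \<theta> h) (last xh)"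
proof (induction m arbitrary: n h xh)
  case 0
  then show ?case by (simp add: cond_exp_rem_def)
next
  case (Suc m)
  define \<mu> where "\<mu> = mu_star G \<theta> h"
  have fin: "\<And>j. finite (types G j)"
    using vg by (simp add: valid_game_def)
  have xi: "last xh \<in> types G i"
    using Suc.prems by (metis last_in_set list.size(3) not_one_le_zero subsetD)
  have bel: "is_belief G \<mu>" and pr: "is_presc G (\<theta> n \<mu>)"
    using is_belief_mu_star[OF vg egf] is_fp_mu_star[OF vg egf] Suc.prems
    by (simp_all add: \<mu>_def is_fp_def)
  have d: "is_dist (acts G i) (bi n h xh)"
    using bi Suc.prems unfolding is_strategy_def by auto
  have "cond_exp_rem G \<theta> i bi (Suc m) n h xh
      = stage_value G n i \<mu> (\<theta> n \<mu>) (last xh) (bi n h xh)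
          (\<lambda>a y. cond_exp_rem G \<theta> i bi m (n+1) (h @ [a]) (xh @ [y]))"
    using cond_exp_rem_Suc[OF fin xi _ bel[unfolded \<mu>_def]] pr Suc.prems by (simp add: \<mu>_def)
  also have "\<dots> \<le> stage_value G n i \<mu> (\<theta> n \<mu>) (last xh) (bi n h xh)
          (\<lambda>a y. Vrem G \<theta> m i (mu_star G \<theta> (h @ [a])) y)"
  proof (rule stage_value_mono[OF _ bel pr])
    show "0 \<le> bi n h xh b" if "b \<in> acts G i" for b
      using d that by (simp add: is_dist_def)
    fix a y assume a: "a \<in> Aprof G" and y: "y \<in> types G i"
    show "0 \<le> Q G i (n+1) (last xh) a y"
      using vg Suc.prems xi a y by (simp add: valid_game_def is_dist_def)
    show "cond_exp_rem G \<theta> i bi m (n+1) (h @ [a]) (xh @ [y]) \<le> Vrem G \<theta> m i (mu_star G \<theta> (h @ [a])) y"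
      using Suc.IH[of "n+1" "h @ [a]" "xh @ [y]"] Suc.prems a y by simp
  qed
  also have "\<dots> \<le> Vrem G \<theta> (Suc m) i \<mu> (last xh)"
    using stage_value_le_Vrem_Suc[OF vg egf _ _ _ _ xi d] Suc.prems by (simp add: \<mu>_def)
  finally show ?case by (simp add: \<mu>_def)
qed

theorem theorem1:
  fixes G :: "('p::finite, 'x, 'a) game"
    and \<theta> :: "nat \<Rightarrow> ('p \<Rightarrow> 'x \<Rightarrow> real) \<Rightarrow> ('p \<Rightarrow> 'x \<Rightarrow> 'a \<Rightarrow> real)"
    and i :: 'p and t :: nat
    and h :: "('p \<Rightarrow> 'a) list" and xh :: "'x list"
    and bi :: "nat \<Rightarrow> ('p \<Rightarrow> 'a) list \<Rightarrow> 'x list \<Rightarrow> 'a \<Rightarrow> real"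
  assumes "valid_game G"
    and "is_egf G \<theta>"
    and "1 \<le> t" and "t \<le> hor G"
    and "length h = t - 1" and "set h \<subseteq> Aprof G"
    and "length xh = t" and "set xh \<subseteq> types G i"
    and "is_strategy G i bi"
  shows "cond_exp G i (beta_star G \<theta> i) (\<lambda>n h' j x. \<theta> n (mu_star G \<theta> h') j x)
            (mu_star G \<theta> h) t h xh
         \<ge> cond_exp G i bi (\<lambda>n h' j x. \<theta> n (mu_star G \<theta> h') j x)
            (mu_star G \<theta> h) t h xh"
proof -
  have cond_exp_eq: "cond_exp G i b (\<lambda>n h' j x. \<theta> n (mu_star G \<theta> h') j x) (mu_star G \<theta> h) t h xh
      = cond_exp_rem G \<theta> i b (hor G + 1 - t) t h xh" for b
    by (simp add: cond_exp_def cond_exp_rem_def)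
  have "cond_exp_rem G \<theta> i bi (hor G + 1 - t) t h xh
      \<le> Vrem G \<theta> (hor G + 1 - t) i (mu_star G \<theta> h) (last xh)"
    using cond_exp_rem_le_Vrem[OF assms(1,2,9)] assms by simp
  also have "\<dots> = cond_exp_rem G \<theta> i (beta_star G \<theta> i) (hor G + 1 - t) t h xh"
    using cond_exp_rem_beta_star_eq_Vrem[OF assms(1,2)] assms by simp
  finally show ?thesis
    unfolding cond_exp_eq .
qed

end
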